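(* Let $\varphi(x)=\sum_{i\ge0}\gamma_ix^i\in\mathbb{K}[[x]]$ and let $k\ge1$ be an integer. Then $$\sum_{i=0}^m(-1)^i\binom{2m+2k-1}{m-i}\binom{m+i}{i}\gamma_{m+i-1}=0\quad\text{for each } m\ge1$$ if and only if $\varphi\in\mathcal{F}_{2k+1}$.
   Context: $\mathbb{K}\in\{\mathbb{Q},\mathbb{R},\mathbb{C}\}$. For $r\in\mathbb{Z}$, $\mathcal{F}_r$ denotes the space of $\varphi\in\mathbb{K}[[x]]$ with $\varphi(x/(x-1))=(1-x)^r\varphi(x)$. *)

theory Defs
  imports "HOL-Computational_Algebra.Formal_Power_Series"
begin

text \<open>The series x/(x-1), written as X * (X - 1)^(-1) (zero constant term, so composition is defined).\<close>
definition fps_xdiv :: "'a::field fps" where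
  "fps_xdiv = fps_X * inverse (fps_X - 1)"

definition one_minus_X_powi :: "int \<Rightarrow> 'a::field fps" where
  "one_minus_X_powi r =
     (if r \<ge> 0 then (1 - fps_X) ^ nat r else inverse ((1 - fps_X) ^ nat (- r)))"

definition fps_F :: "int \<Rightarrow> 'a::field fps set" where
  "fps_F r = {\<phi>. fps_compose \<phi> fps_xdiv = one_minus_X_powi r * \<phi>}"

end

theory Submission
  imports Defs
begin

unbundle fps_syntax

text \<open>
  Write \<open>y = x/(x-1)\<close>, \<open>I = 1/(1-x)\<close>, \<open>N = 2m+2k-1\<close>, and measure the failure of \<open>\<phi> \<in> F\<^sub>2\<^sub>k\<^sub>+\<^sub>1\<close>
  by the defect \<open>\<epsilon> = \<phi>(y) - (1-x)\<^bsup>2k+1\<^esup>\<phi>\<close>. The m-th sum of the theorem is, up to sign,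
  the coefficient of \<open>x\<^bsup>2m-1\<^esup>\<close> in \<open>\<phi>Q\<^sub>m\<close> for the polynomial \<open>Q\<^sub>m = \<Sum>\<^sub>l (-1)\<^sup>l C(N,l) C(2m-l,m) x\<^sup>l\<close>.
  A binomial identity shows that the functional \<open>\<phi> \<mapsto> [x\<^bsup>2m-1\<^esup>] \<phi>Q\<^sub>m\<close> changes sign under
  \<open>\<phi> \<mapsto> I\<^bsup>2k+1\<^esup>\<phi>(y)\<close>, so \<open>[x\<^bsup>2m-1\<^esup>] \<epsilon>I\<^bsup>2k+1\<^esup>Q\<^sub>m = -2[x\<^bsup>2m-1\<^esup>] \<phi>Q\<^sub>m\<close>; hence \<open>\<epsilon> = 0\<close> makes all sums
  vanish. Conversely, \<open>y\<close> is an involution, so \<open>\<epsilon>(y) = -I\<^bsup>2k+1\<^esup>\<epsilon>\<close>: the lowest nonzero coefficient of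
  \<open>\<epsilon>\<close> cannot sit at an even index, and at an odd index \<open>2m-1\<close> it is a nonzero multiple of
  \<open>[x\<^bsup>2m-1\<^esup>] \<epsilon>I\<^bsup>2k+1\<^esup>Q\<^sub>m\<close>, which vanishes when all sums do.
\<close>

lemma fps_nth_inverse_one_minus_X_power:
  "((inverse (1 - fps_X) :: 'a::field fps) ^ Suc a) $ p = of_nat ((a + p) choose p)"
proof (induction a arbitrary: p)
  case 0
  then show ?case by (simp add: fps_inverse_one_minus_fps_X)
next
  case (Suc a)
  have "(inverse (1 - fps_X) :: 'a fps) $ n = 1" for n
    by (simp add: fps_inverse_one_minus_fps_X)
  then have "((inverse (1 - fps_X) :: 'a fps) ^ Suc (Suc a)) $ p
      = (\<Sum>i\<le>p. ((inverse (1 - fps_X) :: 'a fps) ^ Suc a) $ i)"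
    by (simp only: power_Suc2[of _ "Suc a"] fps_mult_nth mult_1_right atLeast0AtMost)
  also have "\<dots> = of_nat (\<Sum>i\<le>p. (a + i) choose i)"
    unfolding Suc.IH by simp
  also have "\<dots> = of_nat ((Suc a + p) choose p)"
    by (simp add: sum_choose_lower)
  finally show ?case .
qed

lemma inverse_one_minus_X_power_nth_0: "(inverse (1 - fps_X) ^ j :: 'a::field fps) $ 0 = 1"
  by (induction j) simp_all

lemma one_minus_X_power_mult_inverse:
  "(1 - fps_X) ^ r * (inverse (1 - fps_X) :: 'a::field fps) ^ r = 1"
  by (simp add: inverse_mult_eq_1' flip: power_mult_distrib)

lemma fps_mult_nth_first_nonzero:
  fixes a b :: "'a::field fps"
  assumes "\<forall>i<n. b $ i = 0"
  shows "(a * b) $ n = a $ 0 * b $ n"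
proof -
  have "(a * b) $ n = (\<Sum>i\<in>{0}. a $ i * b $ (n - i))"
    unfolding fps_mult_nth by (rule sum.mono_neutral_right) (use assms in auto)
  then show ?thesis by simp
qed

lemma fps_compose_mult_nth:
  fixes a b c :: "'a::field fps"
  assumes "b $ 0 = 0"
  shows "((a oo b) * c) $ n = (\<Sum>j=0..n. a $ j * (b ^ j * c) $ n)"
proof -
  have "(a oo b) $ i = (\<Sum>j=0..n. a $ j * (b ^ j) $ i)" if "i \<le> n" for i
    unfolding fps_compose_nth
    by (rule sum.mono_neutral_left) (use that startsby_zero_power_prefix[OF assms] in auto)
  then have "((a oo b) * c) $ n = (\<Sum>i=0..n. (\<Sum>j=0..n. a $ j * (b ^ j) $ i) * c $ (n - i))"
    unfolding fps_mult_nth by (intro sum.cong) simp_all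
  also have "\<dots> = (\<Sum>j=0..n. a $ j * (\<Sum>i=0..n. (b ^ j) $ i * c $ (n - i)))"
    unfolding sum_distrib_left sum_distrib_right mult.assoc by (rule sum.swap)
  finally show ?thesis
    by (simp add: fps_mult_nth)
qed

lemma fps_xdiv_altdef: "(fps_xdiv :: 'a::field fps) = - (fps_X * inverse (1 - fps_X))"
proof -
  have "(fps_X - 1 :: 'a fps) = - (1 - fps_X)" by simp
  then show ?thesis unfolding fps_xdiv_def by (simp only: fps_inverse_minus) simp
qed

lemma fps_xdiv_nth_0 [simp]: "(fps_xdiv :: 'a::field fps) $ 0 = 0"
  by (simp add: fps_xdiv_altdef)

lemma fps_xdiv_nth_1: "(fps_xdiv :: 'a::field fps) $ 1 = -1"
  by (simp add: fps_xdiv_altdef fps_mult_nth_1 fps_inverse_one_minus_fps_X)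

lemma fps_xdiv_power:
  "(fps_xdiv :: 'a::field fps) ^ j = (-1) ^ j * (fps_X ^ j * inverse (1 - fps_X) ^ j)"
  unfolding fps_xdiv_altdef by (rule trans[OF power_minus]) (simp add: power_mult_distrib)

lemma one_minus_fps_xdiv: "1 - (fps_xdiv :: 'a::field fps) = inverse (1 - fps_X)"
proof -
  have "inverse (1 - fps_X) = 1 + fps_X * (inverse (1 - fps_X) :: 'a fps)"
    using one_minus_X_power_mult_inverse[of 1, where 'a='a] by (simp add: algebra_simps)
  then show ?thesis by (simp add: fps_xdiv_altdef)
qed

lemma one_minus_X_compose_fps_xdiv:
  "(1 - fps_X) oo (fps_xdiv :: 'a::field fps) = inverse (1 - fps_X)"
  by (simp add: fps_compose_sub_distrib one_minus_fps_xdiv)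

lemma fps_xdiv_compose_fps_xdiv: "(fps_xdiv :: 'a::field fps) oo fps_xdiv = fps_X"
proof -
  let ?y = "fps_xdiv :: 'a fps" and ?I = "inverse (1 - fps_X) :: 'a fps"
  have "?I oo ?y = 1 - fps_X"
    by (simp add: fps_inverse_compose one_minus_X_compose_fps_xdiv)
  then have "?y oo ?y = - ((fps_X oo ?y) * (1 - fps_X))"
    by (simp add: fps_xdiv_altdef[of] fps_compose_uminus fps_compose_mult_distrib
        del: fps_X_fps_compose_startby0)
  also have "\<dots> = - (?y * (1 - fps_X))"
    by simp
  also have "\<dots> = fps_X * ((1 - fps_X) * ?I)"
    by (simp add: fps_xdiv_altdef algebra_simps)
  finally show ?thesis
    using one_minus_X_power_mult_inverse[of 1, where 'a='a] by simp
qed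

lemma fps_compose_fps_xdiv_nth_first_nonzero:
  fixes e :: "'a::field fps"
  assumes "\<forall>i<n. e $ i = 0"
  shows "(e oo fps_xdiv) $ n = (-1) ^ n * e $ n"
proof -
  have "(e oo fps_xdiv) $ n = (\<Sum>i\<in>{n}. e $ i * (fps_xdiv ^ i) $ n)"
    unfolding fps_compose_nth by (rule sum.mono_neutral_right) (use assms in auto)
  then show ?thesis
    using fps_xdiv_nth_1[where 'a='a] by (simp add: startsby_zero_power_nth_same del: One_nat_def)
qed

definition fps_F_defect :: "'a::field fps \<Rightarrow> nat \<Rightarrow> 'a fps" where
  "fps_F_defect \<phi> r = (\<phi> oo fps_xdiv) - (1 - fps_X) ^ r * \<phi>"

lemma mem_fps_F_iff_defect_eq_0: "\<phi> \<in> fps_F (int r) \<longleftrightarrow> fps_F_defect \<phi> r = 0"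
  by (simp add: fps_F_def fps_F_defect_def one_minus_X_powi_def)

lemma fps_F_defect_compose_fps_xdiv:
  "fps_F_defect \<phi> r oo fps_xdiv = - (inverse (1 - fps_X) ^ r * fps_F_defect (\<phi>::'a::field fps) r)"
proof -
  let ?y = "fps_xdiv :: 'a fps" and ?I = "inverse (1 - fps_X) :: 'a fps"
  have "fps_F_defect \<phi> r oo ?y = ((\<phi> oo ?y) oo ?y) - ((1 - fps_X) oo ?y) ^ r * (\<phi> oo ?y)"
    unfolding fps_F_defect_def
    by (simp add: fps_compose_sub_distrib fps_compose_mult_distrib fps_compose_power[symmetric])
  also have "(\<phi> oo ?y) oo ?y = \<phi>"
    by (simp add: fps_compose_assoc[symmetric] fps_xdiv_compose_fps_xdiv)
  also have "\<phi> - ((1 - fps_X) oo ?y) ^ r * (\<phi> oo ?y) = - (?I ^ r * fps_F_defect \<phi> r)"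
    using one_minus_X_power_mult_inverse[of r, where 'a='a]
    by (simp add: one_minus_X_compose_fps_xdiv fps_F_defect_def algebra_simps)
  finally show ?thesis .
qed

lemma fps_F_defect_nth_first_nonzero_even:
  fixes \<phi> :: "'a::field_char_0 fps"
  assumes "\<forall>i<n. fps_F_defect \<phi> r $ i = 0" and "even n"
  shows "fps_F_defect \<phi> r $ n = 0"
proof -
  let ?e = "fps_F_defect \<phi> r"
  have "(?e oo fps_xdiv) $ n = ?e $ n"
    using fps_compose_fps_xdiv_nth_first_nonzero[OF assms(1)] assms(2) by simp
  moreover have "(?e oo fps_xdiv) $ n = - ?e $ n"
    unfolding fps_F_defect_compose_fps_xdiv
    using fps_mult_nth_first_nonzero[OF assms(1)] by (simp add: inverse_one_minus_X_power_nth_0)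
  ultimately show ?thesis by simp
qed

lemma alternating_binomial_sum_Suc:
  fixes g :: "nat \<Rightarrow> 'a::comm_ring_1"
  shows "(\<Sum>l\<le>Suc n. (-1)^l * of_nat (Suc n choose l) * g l)
    = (\<Sum>l\<le>n. (-1)^l * of_nat (n choose l) * g l) - (\<Sum>l\<le>n. (-1)^l * of_nat (n choose l) * g (Suc l))"
proof -
  have "(\<Sum>l\<le>Suc n. (-1)^l * of_nat (Suc n choose l) * g l)
      = g 0 + (\<Sum>l\<le>n. (-1)^(Suc l) * of_nat (Suc n choose Suc l) * g (Suc l))"
    by (subst sum.atMost_Suc_shift) (simp del: sum.atMost_Suc binomial_Suc_Suc)
  also have "\<dots> = g 0 + (\<Sum>l\<le>n. (-1)^(Suc l) * of_nat (n choose Suc l) * g (Suc l))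
        - (\<Sum>l\<le>n. (-1)^l * of_nat (n choose l) * g (Suc l))"
  proof -
    have "(-1)^(Suc l) * of_nat (Suc n choose Suc l) * g (Suc l)
       = (-1)^(Suc l) * of_nat (n choose Suc l) * g (Suc l) - (-1)^l * of_nat (n choose l) * g (Suc l)"
      for l
      by (simp add: algebra_simps)
    then show ?thesis by (simp only: sum_subtractf add_diff_eq)
  qed
  also have "g 0 + (\<Sum>l\<le>n. (-1)^(Suc l) * of_nat (n choose Suc l) * g (Suc l))
      = (\<Sum>l\<le>Suc n. (-1)^l * of_nat (n choose l) * g l)"
    by (subst sum.atMost_Suc_shift) (simp del: sum.atMost_Suc)
  also have "\<dots> = (\<Sum>l\<le>n. (-1)^l * of_nat (n choose l) * g l)"
    by (simp add: binomial_eq_0)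
  finally show ?thesis .
qed

lemma alternating_binomial_sum_choose:
  assumes "n \<le> A"
  shows "(\<Sum>l\<le>n. (-1)^l * of_nat (n choose l) * (of_nat ((A - l) choose m) :: 'a::comm_ring_1))
      = (if n \<le> m then of_nat ((A - n) choose (m - n)) else 0)"
  using assms
proof (induction n arbitrary: A)
  case 0
  then show ?case by simp
next
  case (Suc n)
  have "\<And>l. A - Suc l = (A - 1) - l" by simp
  then have "(\<Sum>l\<le>Suc n. (-1)^l * of_nat (Suc n choose l) * (of_nat ((A - l) choose m) :: 'a))
     = (if n \<le> m then of_nat ((A - n) choose (m - n)) - of_nat ((A - 1 - n) choose (m - n)) else 0)"
    using Suc.IH[of A] Suc.IH[of "A - 1"] Suc.prems by (simp only: alternating_binomial_sum_Suc) simp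
  also have "\<dots> = (if Suc n \<le> m then of_nat ((A - Suc n) choose (m - Suc n)) else 0)"
  proof (cases "Suc n \<le> m")
    case True
    then have "A - n = Suc (A - Suc n)" "m - n = Suc (m - Suc n)" "A - 1 - n = A - Suc n"
      using Suc.prems by auto
    then show ?thesis using True by simp
  qed (cases "n = m"; simp)
  finally show ?case .
qed

definition test_coeff :: "nat \<Rightarrow> nat \<Rightarrow> nat \<Rightarrow> 'a::field" where
  "test_coeff m k l = (-1)^l * of_nat ((2*m + 2*k - 1) choose l) * of_nat ((2*m - l) choose m)"

definition test_fps :: "nat \<Rightarrow> nat \<Rightarrow> 'a::field fps" where
  "test_fps m k = Abs_fps (test_coeff m k)"

lemma test_fps_mult_inverse_power_nth:
  assumes "n < 2*m"
  shows "(test_fps m k * inverse (1 - fps_X) ^ (2*k + 2*m - n)) $ n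
       = (-1)^n * (test_coeff m k n :: 'a::field)"
proof -
  define N where "N = 2*m + 2*k - 1"
  have "2*k + 2*m - n = Suc (N - n)"
    using assms by (simp add: N_def)
  then have "(test_fps m k * inverse (1 - fps_X) ^ (2*k + 2*m - n)) $ n
      = (\<Sum>l\<le>n. test_coeff m k l * of_nat ((N - n + (n - l)) choose (n - l)) :: 'a)"
    by (simp only: fps_mult_nth test_fps_def fps_nth_Abs_fps fps_nth_inverse_one_minus_X_power
        atLeast0AtMost)
  also have "\<dots> = (\<Sum>l\<le>n. of_nat (N choose n)
      * ((-1)^l * of_nat (n choose l) * of_nat ((2*m - l) choose m)))"
  proof (rule sum.cong)
    fix l assume "l \<in> {..n}"
    then have "l \<le> n" by simp
    then have split: "(N choose n) * (n choose l) = (N choose l) * ((N - n + (n - l)) choose (n - l))"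
      using assms by (subst choose_mult) (auto simp: N_def)
    show "test_coeff m k l * of_nat ((N - n + (n - l)) choose (n - l)) = (of_nat (N choose n)
      * ((-1)^l * of_nat (n choose l) * of_nat ((2*m - l) choose m)) :: 'a)"
      unfolding test_coeff_def N_def[symmetric]
      by (simp add: algebra_simps flip: of_nat_mult) (metis split mult.assoc mult.commute)
  qed simp
  also have "\<dots> = of_nat (N choose n) * of_nat ((2*m - n) choose m)"
    using assms
    by (simp add: alternating_binomial_sum_choose binomial_eq_0 binomial_symmetric[of m "2*m-n"]
        flip: sum_distrib_left)
  also have "\<dots> = (-1)^n * test_coeff m k n"
    by (simp add: test_coeff_def N_def)
  finally show ?thesis .
qed

lemma fps_xdiv_power_mult_test_fps_nth:
  assumes "j < 2*m"
  shows "((fps_xdiv :: 'a::field fps) ^ j * (inverse (1 - fps_X) ^ (2*k+1) * test_fps m k)) $ (2*m-1)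
       = - test_coeff m k (2*m - 1 - j)"
proof -
  let ?I = "inverse (1 - fps_X) :: 'a fps"
  define n where "n = 2*m - 1 - j"
  have n: "n < 2*m" "j + n = Suc (2 * (m - 1))"
    using assms by (simp_all add: n_def)
  have neg: "((-1) ^ j * F) $ i = (-1) ^ j * F $ i" for F :: "'a fps" and i
    by (cases "even j") simp_all
  have "fps_xdiv ^ j * (?I ^ (2*k+1) * test_fps m k)
      = (-1) ^ j * (fps_X ^ j * (test_fps m k * ?I ^ (2*k + 2*m - n)))"
    using assms by (simp add: n_def fps_xdiv_power algebra_simps flip: power_add)
  then have "(fps_xdiv ^ j * (?I ^ (2*k+1) * test_fps m k)) $ (2*m-1)
      = (-1) ^ j * (test_fps m k * ?I ^ (2*k + 2*m - n)) $ n"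
    using assms by (simp only: neg fps_X_power_mult_nth n_def) simp
  also have "\<dots> = (-1) ^ (j + n) * test_coeff m k n"
    using n(1) by (simp only: test_fps_mult_inverse_power_nth power_add mult.assoc)
  also have "(-1::'a) ^ (j + n) = -1"
    unfolding n(2) by simp
  finally show ?thesis
    by (simp add: n_def)
qed

lemma compose_fps_xdiv_mult_test_fps_nth:
  fixes \<phi> :: "'a::field fps"
  assumes "m \<ge> 1"
  shows "((\<phi> oo fps_xdiv) * (inverse (1 - fps_X) ^ (2*k+1) * test_fps m k)) $ (2*m-1)
       = - (\<phi> * test_fps m k) $ (2*m-1)"
proof -
  have "((\<phi> oo fps_xdiv) * (inverse (1 - fps_X) ^ (2*k+1) * test_fps m k)) $ (2*m-1)
      = (\<Sum>j=0..2*m-1. \<phi> $ j * - test_coeff m k (2*m - 1 - j))"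
    unfolding fps_compose_mult_nth[OF fps_xdiv_nth_0]
  proof (rule sum.cong)
    fix j assume "j \<in> {0..2*m-1}"
    then have "j < 2*m" using assms by simp
    then show "\<phi> $ j * (fps_xdiv ^ j * (inverse (1 - fps_X) ^ (2*k+1) * test_fps m k)) $ (2*m-1)
        = \<phi> $ j * - test_coeff m k (2*m - 1 - j)"
      by (simp only: fps_xdiv_power_mult_test_fps_nth)
  qed simp
  then show ?thesis
    by (simp add: fps_mult_nth test_fps_def sum_negf)
qed

lemma fps_F_defect_mult_test_fps_nth:
  fixes \<phi> :: "'a::field fps"
  assumes "m \<ge> 1"
  shows "(fps_F_defect \<phi> (2*k+1) * (inverse (1 - fps_X) ^ (2*k+1) * test_fps m k)) $ (2*m-1)
       = - 2 * (\<phi> * test_fps m k) $ (2*m-1)"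
proof -
  let ?I = "inverse (1 - fps_X) :: 'a fps"
  have "fps_F_defect \<phi> (2*k+1) * (?I ^ (2*k+1) * test_fps m k)
     = (\<phi> oo fps_xdiv) * (?I ^ (2*k+1) * test_fps m k)
       - ((1 - fps_X) ^ (2*k+1) * ?I ^ (2*k+1)) * (\<phi> * test_fps m k)"
    unfolding fps_F_defect_def by (simp add: algebra_simps)
  also have "\<dots> = (\<phi> oo fps_xdiv) * (?I ^ (2*k+1) * test_fps m k) - \<phi> * test_fps m k"
    by (simp only: one_minus_X_power_mult_inverse mult_1)
  finally show ?thesis
    using compose_fps_xdiv_mult_test_fps_nth[OF assms, of \<phi> k] by simp
qed

lemma test_fps_mult_nth:
  fixes \<phi> :: "'a::field fps"
  assumes "m \<ge> 1"
  shows "(\<phi> * test_fps m k) $ (2*m-1) = (-1)^m * (\<Sum>i=0..m. (-1) ^ i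
           * of_nat ((2*m + 2*k - 1) choose (m - i)) * of_nat ((m + i) choose i) * \<phi> $ (m + i - 1))"
proof -
  have "(\<phi> * test_fps m k) $ (2*m-1) = (\<Sum>a=0..2*m-1. \<phi> $ a * test_coeff m k (2*m-1-a))"
    by (simp add: fps_mult_nth test_fps_def)
  also have "\<dots> = (\<Sum>a=(m-1)..2*m-1. \<phi> $ a * test_coeff m k (2*m-1-a))"
    by (rule sum.mono_neutral_right) (auto simp: test_coeff_def binomial_eq_0)
  also have "\<dots> = (\<Sum>i=0..m. \<phi> $ (i + (m-1)) * test_coeff m k (2*m-1-(i + (m-1))))"
  proof -
    have "{m-1..2*m-1} = {0 + (m-1)..m + (m-1)}"
      using assms by auto
    then show ?thesis
      by (simp only: sum.shift_bounds_cl_nat_ivl)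
  qed
  also have "\<dots> = (\<Sum>i=0..m. (-1)^m * ((-1) ^ i
           * of_nat ((2*m + 2*k - 1) choose (m - i)) * of_nat ((m + i) choose i) * \<phi> $ (m + i - 1)))"
  proof (rule sum.cong)
    fix i assume "i \<in> {0..m}"
    then have i: "i \<le> m" by simp
    then have "(-1::'a) ^ (m - i) = (-1)^m * (-1)^i"
      by (cases "even i") (simp_all add: power_diff)
    moreover have "i + (m - 1) = m + i - 1" "2*m-1-(i + (m-1)) = m - i" "2*m - (m-i) = m + i"
      using i assms by auto
    moreover have "(m + i) choose m = (m + i) choose i"
      by (simp add: binomial_symmetric[of i "m+i"])
    ultimately show "\<phi> $ (i + (m-1)) * test_coeff m k (2*m-1-(i + (m-1))) = (-1)^m * ((-1) ^ i
           * of_nat ((2*m + 2*k - 1) choose (m - i)) * of_nat ((m + i) choose i) * \<phi> $ (m + i - 1))"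
      unfolding test_coeff_def by (simp add: algebra_simps)
  qed simp
  finally show ?thesis
    by (simp add: sum_distrib_left)
qed

lemma fps_F_defect_eq_0_iff_test_fps:
  fixes \<phi> :: "'a::field_char_0 fps"
  shows "fps_F_defect \<phi> (2*k+1) = 0 \<longleftrightarrow> (\<forall>m\<ge>1. (\<phi> * test_fps m k) $ (2*m-1) = 0)"
proof
  assume "fps_F_defect \<phi> (2*k+1) = 0"
  then show "\<forall>m\<ge>1. (\<phi> * test_fps m k) $ (2*m-1) = 0"
    using fps_F_defect_mult_test_fps_nth[of _ \<phi> k] by simp
next
  assume tests: "\<forall>m\<ge>1. (\<phi> * test_fps m k) $ (2*m-1) = 0"
  let ?e = "fps_F_defect \<phi> (2*k+1)"
  have "\<forall>i<n. ?e $ i = 0" for n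
  proof (induction n)
    case (Suc n)
    have "?e $ n = 0"
    proof (cases "even n")
      case True
      then show ?thesis
        using fps_F_defect_nth_first_nonzero_even Suc.IH by blast
    next
      case False
      then obtain j where "n = 2*j + 1"
        by (rule oddE)
      define m where "m = Suc j"
      have m: "m \<ge> 1" "n = 2*m - 1"
        using \<open>n = 2*j + 1\<close> by (simp_all add: m_def)
      let ?T = "inverse (1 - fps_X) ^ (2*k+1) * test_fps m k :: 'a fps"
      have "?e $ n * ?T $ 0 = (?e * ?T) $ n"
        using fps_mult_nth_first_nonzero[OF Suc.IH, of ?T] by (simp add: mult.commute)
      also have "\<dots> = 0"
        using fps_F_defect_mult_test_fps_nth[OF m(1), of \<phi> k] tests m by simp
      finally show ?thesis
        by (simp add: test_fps_def test_coeff_def inverse_one_minus_X_power_nth_0)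
    qed
    then show ?case
      using Suc.IH less_Suc_eq by auto
  qed simp
  then show "?e = 0"
    by (intro fps_ext) auto
qed

theorem lemma4p6:
  fixes \<phi> :: "'a::field_char_0 fps" and k :: nat
  assumes "k \<ge> 1"
  shows "(\<forall>m\<ge>1. (\<Sum>i=0..m. (-1) ^ i * of_nat ((2*m + 2*k - 1) choose (m - i))
              * of_nat ((m + i) choose i) * fps_nth \<phi> (m + i - 1)) = (0::'a))
         \<longleftrightarrow> \<phi> \<in> fps_F (2 * int k + 1)"
proof -
  have "\<phi> \<in> fps_F (2 * int k + 1) \<longleftrightarrow> fps_F_defect \<phi> (2*k+1) = 0"
    using mem_fps_F_iff_defect_eq_0[of \<phi> "2*k+1"] by (simp add: add.commute)
  also have "\<dots> \<longleftrightarrow> (\<forall>m\<ge>1. (\<phi> * test_fps m k) $ (2*m-1) = 0)"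
    by (rule fps_F_defect_eq_0_iff_test_fps)
  also have "\<dots> \<longleftrightarrow> (\<forall>m\<ge>1. (\<Sum>i=0..m. (-1) ^ i * of_nat ((2*m + 2*k - 1) choose (m - i))
              * of_nat ((m + i) choose i) * \<phi> $ (m + i - 1)) = 0)"
  proof -
    have "(\<phi> * test_fps m k) $ (2*m-1) = 0 \<longleftrightarrow> (\<Sum>i=0..m. (-1) ^ i
        * of_nat ((2*m + 2*k - 1) choose (m - i)) * of_nat ((m + i) choose i) * \<phi> $ (m + i - 1)) = 0"
      if "m \<ge> 1" for m
      using test_fps_mult_nth[OF that, of \<phi> k] by simp
    then show ?thesis
      by blast
  qed
  finally show ?thesis
    by blast
qed

end
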